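(* Let $n\ge3$ and let $U$ be a unipotent subgroup of $G$, i.e. a $G$-conjugate of a closed subgroup of $N$. If $U\subset HM$ then $\dim U\le n-3$.
   Context: $G=\mathrm{SO}(1,n)$ is realized as the $g\in\mathrm{SL}_{n+1}(\mathbb{R})$ preserving $2x_0x_1+x_2^2+\dots+x_n^2$, i.e. $g\begin{pmatrix}J&0\\0&I_{n-1}\end{pmatrix}g^T=\begin{pmatrix}J&0\\0&I_{n-1}\end{pmatrix}$, $J=\begin{pmatrix}0&1\\1&0\end{pmatrix}$. $N$ is the abelian unipotent subgroup with Lie algebra $\mathfrak{n}=\{X(R)\}$, where $X(R)=\begin{pmatrix}0&b\\c&0\end{pmatrix}$ (blocks of size $2$ and $n-1$), $b=\begin{pmatrix}R\\0\end{pmatrix}$, $R\in M_{1\times(n-1)}(\mathbb{R})$, $c=-b^TJ$. $M=\{\mathrm{diag}(\epsilon I_2,m):\epsilon=\pm1,m\in\mathrm{SO}(n-1)\}$. Writing matrices in $3\times3$ block form with block sizes $2,2,n-3$ (coordinates $(x_0,x_1)$, $(x_2,x_3)$, $(x_4,\dots,x_n)$), $H\cong\mathrm{SO}(1,n-2)$ is the subgroup of $G$ acting trivially on the coordinates $x_2,x_3$ (so its Lie algebra has the pattern $\begin{pmatrix}*&0&*\\0&0&0\\ *&0&*\end{pmatrix}$). *)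

theory Defs
  imports "HOL-Analysis.Analysis" "Jordan_Normal_Form.Determinant"
begin

text \<open>Matrices are (n+1) x (n+1) real matrices (Jordan_Normal_Form type real mat),
  rows/columns indexed 0..n, corresponding to the coordinates x_0, ..., x_n.\<close>

definition Qmat :: "nat \<Rightarrow> real mat" where
  "Qmat n = mat (n+1) (n+1) (\<lambda>(i,j).
      if (i = 0 \<and> j = 1) \<or> (i = 1 \<and> j = 0) then 1
      else if i = j \<and> 2 \<le> i then 1 else 0)"

definition Ggrp :: "nat \<Rightarrow> real mat set" where
  "Ggrp n = {g \<in> carrier_mat (n+1) (n+1). det g = 1 \<and> g * Qmat n * transpose_mat g = Qmat n}"

definition mexp :: "real mat \<Rightarrow> real mat" where
  "mexp A = mat (dim_row A) (dim_col A) (\<lambda>(i,j). \<Sum>k. (A ^\<^sub>m k) $$ (i,j) / fact k)"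

text \<open>X(R): R is the row vector (R_2, ..., R_n) (only the entries of R at indices 2..n are used);
  b = (R;0) sits in rows 0,1 / columns 2..n, and c = - b^T J sits in rows 2..n / columns 0,1.\<close>
definition Xmat :: "nat \<Rightarrow> (nat \<Rightarrow> real) \<Rightarrow> real mat" where
  "Xmat n R = mat (n+1) (n+1) (\<lambda>(i,j).
      if i = 0 \<and> 2 \<le> j then R j
      else if 2 \<le> i \<and> j = 1 then - R i else 0)"

definition Ngrp :: "nat \<Rightarrow> real mat set" where
  "Ngrp n = {mexp (Xmat n R) | R. True}"

definition closed_subgroup :: "nat \<Rightarrow> real mat set \<Rightarrow> bool" where
  "closed_subgroup n V \<longleftrightarrow>
     V \<subseteq> carrier_mat (n+1) (n+1) \<and> 1\<^sub>m (n+1) \<in> V \<and>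
     (\<forall>a\<in>V. \<forall>b\<in>V. a * b \<in> V) \<and>
     (\<forall>a\<in>V. \<exists>b\<in>V. a * b = 1\<^sub>m (n+1) \<and> b * a = 1\<^sub>m (n+1)) \<and>
     (\<forall>f A. (\<forall>k. f k \<in> V) \<longrightarrow> A \<in> carrier_mat (n+1) (n+1) \<longrightarrow>
        (\<forall>i<n+1. \<forall>j<n+1. (\<lambda>k. f k $$ (i,j)) \<longlonglongrightarrow> A $$ (i,j)) \<longrightarrow> A \<in> V)"

definition unipotent :: "nat \<Rightarrow> real mat set \<Rightarrow> bool" where
  "unipotent n U \<longleftrightarrow> (\<exists>g h V. g \<in> Ggrp n \<and> h \<in> carrier_mat (n+1) (n+1) \<and>
      g * h = 1\<^sub>m (n+1) \<and> h * g = 1\<^sub>m (n+1) \<and>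
      closed_subgroup n V \<and> V \<subseteq> Ngrp n \<and> U = {g * v * h | v. v \<in> V})"

definition Mgrp :: "nat \<Rightarrow> real mat set" where
  "Mgrp n = {four_block_mat (\<epsilon> \<cdot>\<^sub>m 1\<^sub>m 2) (0\<^sub>m 2 (n-1)) (0\<^sub>m (n-1) 2) m | \<epsilon> m.
      (\<epsilon> = 1 \<or> \<epsilon> = -1) \<and> m \<in> carrier_mat (n-1) (n-1) \<and>
      m * transpose_mat m = 1\<^sub>m (n-1) \<and> det m = 1}"

definition Hgrp :: "nat \<Rightarrow> real mat set" where
  "Hgrp n = {g \<in> Ggrp n. \<forall>i<n+1. \<forall>j<n+1. (i \<in> {2,3} \<or> j \<in> {2,3}) \<longrightarrow>
       g $$ (i,j) = (if i = j then 1 else 0)}"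

definition HM :: "nat \<Rightarrow> real mat set" where
  "HM n = {h * m | h m. h \<in> Hgrp n \<and> m \<in> Mgrp n}"

definition lie_alg :: "nat \<Rightarrow> real mat set \<Rightarrow> real mat set" where
  "lie_alg n U = {X \<in> carrier_mat (n+1) (n+1). \<forall>t::real. mexp (t \<cdot>\<^sub>m X) \<in> U}"

definition mat_lin_indep :: "nat \<Rightarrow> real mat set \<Rightarrow> bool" where
  "mat_lin_indep n S \<longleftrightarrow> (\<forall>c :: real mat \<Rightarrow> real.
     (\<forall>i<n+1. \<forall>j<n+1. (\<Sum>X\<in>S. c X * X $$ (i,j)) = 0) \<longrightarrow> (\<forall>X\<in>S. c X = 0))"

definition mat_dim :: "nat \<Rightarrow> real mat set \<Rightarrow> nat" where
  "mat_dim n L = Sup {card S | S. finite S \<and> S \<subseteq> L \<and> mat_lin_indep n S}"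

definition group_dim :: "nat \<Rightarrow> real mat set \<Rightarrow> nat" where
  "group_dim n U = mat_dim n (lie_alg n U)"

end

theory Submission
  imports Defs "HOL-Library.Function_Algebras"
begin

text \<open>Conjugating by \<open>g \<in> G\<close>, every \<open>X\<close> in the Lie algebra of \<open>U\<close> has the form \<open>g X(R) g\<^sup>-\<^sup>1\<close>,
  since \<open>g\<^sup>-\<^sup>1 X g\<close> is the velocity at \<open>0\<close> of the curve \<open>g\<^sup>-\<^sup>1 exp(tX) g\<close> in \<open>N\<close>.
  Rows 2 and 3 of every element of \<open>HM\<close> are unit vectors (\<open>H\<close> fixes \<open>x\<^sub>2, x\<^sub>3\<close> and \<open>M\<close> acts
  orthogonally on \<open>x\<^sub>2, \<dots>, x\<^sub>n\<close>), and for the nilpotent \<open>X\<close> the squared norm of such a row of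
  \<open>exp(tX)\<close> is a polynomial in \<open>t\<close>; its being constant forces rows 2 and 3 of \<open>X\<close> to vanish.
  This means \<open>g\<^sub>i\<^sub>0 R = 0\<close> and \<open>R \<bottom> (g\<^sub>i\<^sub>2, \<dots>, g\<^sub>i\<^sub>n)\<close> for \<open>i = 2, 3\<close>. If \<open>g\<^sub>2\<^sub>0\<close> or \<open>g\<^sub>3\<^sub>0\<close> is
  nonzero the Lie algebra is trivial; otherwise the invariance of the quadratic form makes those two
  rows of \<open>g\<close> orthonormal in \<open>\<real>\<^sup>n\<^sup>-\<^sup>1\<close>, so the vectors \<open>R\<close> span at most \<open>(n - 1) - 2\<close> dimensions.\<close>

lemma index_mult_mat_sum:
  assumes "A \<in> carrier_mat m k" "B \<in> carrier_mat k p" "i < m" "j < p"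
  shows "(A * B) $$ (i,j) = (\<Sum>l<k. A $$ (i,l) * B $$ (l,j))"
  using assms by (auto simp: scalar_prod_def lessThan_atLeast0 intro!: sum.cong)

lemma index_mult_mat_triple:
  assumes "h \<in> carrier_mat m m" "M \<in> carrier_mat m m" "g \<in> carrier_mat m m" "i < m" "j < m"
  shows "(h * M * g) $$ (i,j) = (\<Sum>b<m. (\<Sum>a<m. h $$ (i,a) * M $$ (a,b)) * g $$ (b,j))"
proof -
  have "(h * M * g) $$ (i,j) = (\<Sum>b<m. (h * M) $$ (i,b) * g $$ (b,j))"
    using assms by (intro index_mult_mat_sum[of _ m m]) auto
  also have "\<dots> = (\<Sum>b<m. (\<Sum>a<m. h $$ (i,a) * M $$ (a,b)) * g $$ (b,j))"
    using assms by (intro sum.cong refl, subst index_mult_mat_sum[of _ m m]) auto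
  finally show ?thesis .
qed

lemma mult_mat_row_zero:
  assumes "A \<in> carrier_mat m k" "B \<in> carrier_mat k p" "i < m" "j < p"
    and "\<And>l. l < k \<Longrightarrow> A $$ (i,l) = 0"
  shows "(A * B) $$ (i,j) = 0"
  using assms by (simp add: index_mult_mat_sum del: index_mult_mat)

lemma sum_lessThan_Suc_split01:
  fixes f :: "nat \<Rightarrow> real"
  assumes "n \<ge> 1"
  shows "(\<Sum>b<n+1. f b) = f 0 + f 1 + (\<Sum>b\<in>{2..n}. f b)"
proof -
  have "{..<n+1} = {0,1} \<union> {2..n}" using assms by auto
  then show ?thesis by (simp add: sum.union_disjoint)
qed

subsection \<open>Conjugation and powers of matrices\<close>

lemma conj_mult_mat:
  fixes g h A B :: "real mat"
  assumes g: "g \<in> carrier_mat m m" and h: "h \<in> carrier_mat m m" and A: "A \<in> carrier_mat m m"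
    and B: "B \<in> carrier_mat m m" and hg: "h * g = 1\<^sub>m m"
  shows "(g * A * h) * (g * B * h) = g * (A * B) * h"
proof -
  have "(g * A * h) * (g * B * h) = g * A * ((h * g) * B * h)"
    using g h A B by (simp add: assoc_mult_mat[of _ m m _ m _ m])
  also have "\<dots> = g * (A * B) * h"
    unfolding hg using g h A B by (simp add: assoc_mult_mat[of _ m m _ m _ m])
  finally show ?thesis .
qed

lemma conj_cancel_mat:
  fixes g h A :: "real mat"
  assumes g: "g \<in> carrier_mat m m" and h: "h \<in> carrier_mat m m" and A: "A \<in> carrier_mat m m"
    and gh: "g * h = 1\<^sub>m m"
  shows "g * (h * A * g) * h = A"
proof -
  have "g * (h * A * g) * h = (g * h) * A * (g * h)"
    using g h A by (simp add: assoc_mult_mat[of _ m m _ m _ m])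
  then show ?thesis using gh A by simp
qed

lemma pow_mat_conj:
  fixes g h A :: "real mat"
  assumes g: "g \<in> carrier_mat m m" and h: "h \<in> carrier_mat m m" and A: "A \<in> carrier_mat m m"
    and gh: "g * h = 1\<^sub>m m" and hg: "h * g = 1\<^sub>m m"
  shows "(g * A * h) ^\<^sub>m k = g * A ^\<^sub>m k * h"
proof (induction k)
  case 0
  then show ?case using g h A gh by simp
next
  case (Suc k)
  then show ?case
    using conj_mult_mat[OF g h pow_carrier_mat[OF A] A hg, of k] by simp
qed

lemma pow_mat_smult:
  fixes X :: "real mat"
  assumes "X \<in> carrier_mat m m"
  shows "(t \<cdot>\<^sub>m X) ^\<^sub>m k = t ^ k \<cdot>\<^sub>m (X ^\<^sub>m k)"
proof (induction k)
  case 0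
  then show ?case using assms by (auto intro!: eq_matI)
next
  case (Suc k)
  have "(t \<cdot>\<^sub>m X) ^\<^sub>m Suc k = (t ^ k \<cdot>\<^sub>m (X ^\<^sub>m k)) * (t \<cdot>\<^sub>m X)" using Suc by simp
  also have "\<dots> = t ^ Suc k \<cdot>\<^sub>m (X ^\<^sub>m Suc k)"
    using assms
    by (auto intro!: eq_matI simp: index_mult_mat_sum[of _ m m _ m] sum_distrib_left mult_ac)
  finally show ?case .
qed

lemma pow_mat_vanishes_above:
  fixes X :: "real mat"
  assumes X: "X \<in> carrier_mat m m" and d: "X ^\<^sub>m d = 0\<^sub>m m m" and k: "d \<le> k"
  shows "X ^\<^sub>m k = 0\<^sub>m m m"
  using k by (induction k rule: dec_induct) (use X d in auto)

lemma pow_mat_index_bound: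
  fixes X :: "real mat"
  assumes X: "X \<in> carrier_mat m m" and ab: "a < m" "b < m"
  shows "\<bar>(X ^\<^sub>m k) $$ (a,b)\<bar> \<le> (real m * (\<Sum>i<m. \<Sum>j<m. \<bar>X $$ (i,j)\<bar>)) ^ k"
  using ab
proof (induction k arbitrary: b)
  case 0
  then show ?case using X ab by auto
next
  case (Suc k)
  define M where "M = (\<Sum>i<m. \<Sum>j<m. \<bar>X $$ (i,j)\<bar>)"
  have M0: "M \<ge> 0" unfolding M_def by (auto intro: sum_nonneg)
  have Mb: "\<bar>X $$ (l,b)\<bar> \<le> M" if "l < m" for l
  proof -
    have "\<bar>X $$ (l,b)\<bar> \<le> (\<Sum>j<m. \<bar>X $$ (l,j)\<bar>)"
      using Suc.prems by (intro member_le_sum) auto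
    also have "\<dots> \<le> M" unfolding M_def
      using that by (intro member_le_sum[where f = "\<lambda>i. \<Sum>j<m. \<bar>X $$ (i,j)\<bar>"]) (auto intro: sum_nonneg)
    finally show ?thesis .
  qed
  have "(X ^\<^sub>m Suc k) $$ (a,b) = (\<Sum>l<m. (X ^\<^sub>m k) $$ (a,l) * X $$ (l,b))"
    using index_mult_mat_sum[of "X ^\<^sub>m k" m m X m a b] X Suc.prems ab by (simp del: index_mult_mat)
  also have "\<bar>\<dots>\<bar> \<le> (\<Sum>l<m. \<bar>(X ^\<^sub>m k) $$ (a,l)\<bar> * \<bar>X $$ (l,b)\<bar>)"
    by (metis (no_types, lifting) abs_mult sum.cong sum_abs)
  also have "\<dots> \<le> (\<Sum>l<m. (real m * M) ^ k * M)"
    using Suc.IH[OF ab(1)] Mb M0 unfolding M_def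
    by (intro sum_mono mult_mono) auto
  also have "\<dots> = (real m * M) ^ Suc k" by (simp add: mult_ac)
  finally show ?case unfolding M_def .
qed

subsection \<open>The matrix exponential along a line\<close>

lemma mexp_carrier: "A \<in> carrier_mat m m \<Longrightarrow> mexp A \<in> carrier_mat m m"
  unfolding mexp_def by auto

lemma mexp_smult_index:
  fixes X :: "real mat"
  assumes X: "X \<in> carrier_mat m m" and "i < m" "j < m"
  shows "mexp (t \<cdot>\<^sub>m X) $$ (i,j) = (\<Sum>k. (X ^\<^sub>m k) $$ (i,j) / fact k * t ^ k)"
  using assms unfolding mexp_def by (simp add: pow_mat_smult[OF X] mult_ac)

lemma mexp_smult_zero:
  fixes X :: "real mat"
  assumes X: "X \<in> carrier_mat m m"
  shows "mexp (0 \<cdot>\<^sub>m X) = 1\<^sub>m m"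
proof (rule eq_matI)
  fix i j assume "i < dim_row (1\<^sub>m m :: real mat)" "j < dim_col (1\<^sub>m m :: real mat)"
  then show "mexp (0 \<cdot>\<^sub>m X) $$ (i,j) = 1\<^sub>m m $$ (i,j)"
    using X by (subst mexp_smult_index[OF X], simp, simp, subst powser_zero) simp
qed (use X in \<open>simp_all add: mexp_def\<close>)

lemma mexp_smult_nilpotent:
  fixes X :: "real mat"
  assumes X: "X \<in> carrier_mat m m" and X3: "X ^\<^sub>m 3 = 0\<^sub>m m m" and ij: "i < m" "j < m"
  shows "mexp (t \<cdot>\<^sub>m X) $$ (i,j) = 1\<^sub>m m $$ (i,j) + t * X $$ (i,j) + t\<^sup>2 / 2 * (X ^\<^sub>m 2) $$ (i,j)"
proof -
  have "(X ^\<^sub>m k) $$ (i,j) / fact k * t ^ k = 0" if "k \<notin> {0,1,2}" for k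
    using pow_mat_vanishes_above[OF X X3, of k] that ij by auto
  then have "(\<Sum>k. (X ^\<^sub>m k) $$ (i,j) / fact k * t ^ k)
      = (\<Sum>k\<in>{0,1,2}. (X ^\<^sub>m k) $$ (i,j) / fact k * t ^ k)"
    by (intro suminf_finite) auto
  also have "\<dots> = 1\<^sub>m m $$ (i,j) + t * X $$ (i,j) + t\<^sup>2 / 2 * (X ^\<^sub>m 2) $$ (i,j)"
    using X ij by (simp add: power2_eq_square)
  finally show ?thesis by (simp add: mexp_smult_index[OF X ij])
qed

lemma has_real_derivative_mexp_smult:
  fixes X :: "real mat"
  assumes X: "X \<in> carrier_mat m m" and ab: "a < m" "b < m"
  shows "((\<lambda>t. mexp (t \<cdot>\<^sub>m X) $$ (a,b)) has_real_derivative X $$ (a,b)) (at 0)"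
proof -
  define c where "c k = (X ^\<^sub>m k) $$ (a,b) / fact k" for k
  define B where "B = real m * (\<Sum>i<m. \<Sum>j<m. \<bar>X $$ (i,j)\<bar>)"
  have summable: "summable (\<lambda>k. c k * y ^ k)" for y :: real
  proof (rule summable_comparison_test)
    show "summable (\<lambda>k. inverse (fact k) * (B * \<bar>y\<bar>) ^ k)" by (rule summable_exp)
    have "norm (c k * y ^ k) \<le> inverse (fact k) * (B * \<bar>y\<bar>) ^ k" for k
      using pow_mat_index_bound[OF X ab, of k] unfolding c_def B_def
      by (simp add: abs_mult power_abs divide_inverse power_mult_distrib mult_ac) (simp add: mult_left_mono)
    then show "\<exists>N. \<forall>k\<ge>N. norm (c k * y ^ k) \<le> inverse (fact k) * (B * \<bar>y\<bar>) ^ k" by blast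
  qed
  have "((\<lambda>t. \<Sum>k. c k * t ^ k) has_real_derivative (\<Sum>k. diffs c k * 0 ^ k)) (at 0)"
    by (rule termdiffs_strong_converges_everywhere) (rule summable)
  moreover have "(\<Sum>k. diffs c k * 0 ^ k) = X $$ (a,b)"
    using X ab by (subst powser_zero) (simp add: diffs_def c_def)
  moreover have "(\<lambda>t. mexp (t \<cdot>\<^sub>m X) $$ (a,b)) = (\<lambda>t. \<Sum>k. c k * t ^ k)"
    unfolding mexp_smult_index[OF X ab] c_def ..
  ultimately show ?thesis by simp
qed

lemma has_real_derivative_conj_mexp_smult:
  fixes X h g :: "real mat"
  assumes X: "X \<in> carrier_mat m m" and h: "h \<in> carrier_mat m m" and g: "g \<in> carrier_mat m m"
    and ij: "i < m" "j < m"
  shows "((\<lambda>t. (h * mexp (t \<cdot>\<^sub>m X) * g) $$ (i,j)) has_real_derivative (h * X * g) $$ (i,j)) (at 0)"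
proof -
  have c: "mexp (t \<cdot>\<^sub>m X) \<in> carrier_mat m m" for t using X by (intro mexp_carrier) auto
  have "((\<lambda>t. (\<Sum>b<m. (\<Sum>a<m. h $$ (i,a) * mexp (t \<cdot>\<^sub>m X) $$ (a,b)) * g $$ (b,j)))
     has_real_derivative (\<Sum>b<m. (\<Sum>a<m. h $$ (i,a) * X $$ (a,b)) * g $$ (b,j))) (at 0)"
    by (intro DERIV_sum DERIV_cmult_right DERIV_cmult has_real_derivative_mexp_smult[OF X]) auto
  then show ?thesis
    using index_mult_mat_triple[OF h c g ij] index_mult_mat_triple[OF h X g ij] by simp
qed

text \<open>The squared norm of row \<open>i\<close> of \<open>exp(tX)\<close> is \<open>1 + 2t x\<^sub>i + t\<^sup>2 A + t\<^sup>3 C + t\<^sup>4 B/4\<close> where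
  \<open>x\<close>, \<open>y\<close> are row \<open>i\<close> of \<open>X\<close>, \<open>X\<^sup>2\<close> and \<open>B = |y|\<^sup>2\<close>, \<open>A = |x|\<^sup>2 + y\<^sub>i\<close>; constancy gives \<open>B = A = 0\<close>.\<close>

lemma mexp_row_unit_imp_row_zero:
  fixes X :: "real mat"
  assumes X: "X \<in> carrier_mat m m" and X3: "X ^\<^sub>m 3 = 0\<^sub>m m m" and i: "i < m"
    and unit: "\<And>t. (\<Sum>j<m. (mexp (t \<cdot>\<^sub>m X) $$ (i,j))\<^sup>2) = 1"
    and j: "j < m"
  shows "X $$ (i,j) = 0"
proof -
  define x where "x j = X $$ (i,j)" for j
  define y where "y j = (X ^\<^sub>m 2) $$ (i,j)" for j
  define A where "A = (\<Sum>j<m. (x j)\<^sup>2) + y i"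
  define B where "B = (\<Sum>j<m. (y j)\<^sup>2)"
  define C where "C = (\<Sum>j<m. x j * y j)"
  have delta: "(\<Sum>j<m. (if i = j then 1 else 0) * f j) = f i" for f :: "nat \<Rightarrow> real"
    using i by (simp add: if_distrib[of "\<lambda>a. a * _"] cong: if_cong)
  have poly: "2 * t * x i + t\<^sup>2 * A + t ^ 3 * C + t ^ 4 * B / 4 = 0" for t
  proof -
    have "1 = (\<Sum>j<m. ((if i = j then 1 else 0) + t * x j + t\<^sup>2 / 2 * y j)\<^sup>2)"
      using unit[of t] i by (simp add: mexp_smult_nilpotent[OF X X3 i] x_def y_def)
    also have "\<dots> = (\<Sum>j<m. (if i = j then 1 else 0) * (1 + 2 * t * x j + t\<^sup>2 * y j)
        + t\<^sup>2 * (x j)\<^sup>2 + t ^ 3 * (x j * y j) + t ^ 4 / 4 * (y j)\<^sup>2)"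
      by (intro sum.cong refl) (simp add: power2_eq_square power3_eq_cube power4_eq_xxxx algebra_simps)
    also have "\<dots> = (\<Sum>j<m. (if i = j then 1 else 0) * (1 + 2 * t * x j + t\<^sup>2 * y j))
        + t\<^sup>2 * (\<Sum>j<m. (x j)\<^sup>2) + t ^ 3 * C + t ^ 4 / 4 * B"
      unfolding B_def C_def by (simp add: sum.distrib sum_distrib_left)
    also have "\<dots> = 1 + 2 * t * x i + t\<^sup>2 * A + t ^ 3 * C + t ^ 4 * B / 4"
      unfolding delta A_def by (simp add: algebra_simps)
    finally show ?thesis by simp
  qed
  have "A = 0" "B = 0" using poly[of 1] poly[of "-1"] poly[of 2] poly[of "-2"] by simp_all
  then have "y i = 0" and "(\<Sum>j<m. (x j)\<^sup>2) = 0"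
    using i unfolding A_def B_def by (simp_all add: sum_nonneg_eq_0_iff)
  then show ?thesis using j by (simp add: sum_nonneg_eq_0_iff x_def)
qed

subsection \<open>The Lie algebra of \<open>N\<close>\<close>

lemma Xmat_dim [simp]: "dim_row (Xmat n R) = Suc n" "dim_col (Xmat n R) = Suc n"
  unfolding Xmat_def by simp_all

lemma Xmat_carrier [simp]: "Xmat n R \<in> carrier_mat (n+1) (n+1)"
  unfolding Xmat_def by auto

lemma Xmat_index:
  "i < n+1 \<Longrightarrow> j < n+1 \<Longrightarrow> Xmat n R $$ (i,j) =
      (if i = 0 \<and> 2 \<le> j then R j else if 2 \<le> i \<and> j = 1 then - R i else 0)"
  unfolding Xmat_def by simp

lemma Xmat_zero: "Xmat n (\<lambda>_. 0) = 0\<^sub>m (n+1) (n+1)"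
  unfolding Xmat_def by (rule eq_matI) auto

lemma Xmat_square_index:
  assumes ij: "i < n+1" "j < n+1"
  shows "(Xmat n R * Xmat n R) $$ (i,j) = (if i = 0 \<and> j = 1 then - (\<Sum>k\<in>{2..n}. (R k)\<^sup>2) else 0)"
proof -
  have "(Xmat n R * Xmat n R) $$ (i,j) = (\<Sum>l<n+1. Xmat n R $$ (i,l) * Xmat n R $$ (l,j))"
    by (rule index_mult_mat_sum[OF Xmat_carrier Xmat_carrier ij])
  also have "\<dots> = (\<Sum>l<n+1. if i = 0 \<and> j = 1 \<and> 2 \<le> l then - (R l)\<^sup>2 else 0)"
    using ij by (intro sum.cong refl) (auto simp: Xmat_index power2_eq_square)
  also have "\<dots> = (\<Sum>l\<in>{l\<in>{..<n+1}. i = 0 \<and> j = 1 \<and> 2 \<le> l}. - (R l)\<^sup>2)"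
    by (rule sum.inter_filter[symmetric]) auto
  also have "\<dots> = (if i = 0 \<and> j = 1 then - (\<Sum>k\<in>{2..n}. (R k)\<^sup>2) else 0)"
  proof (cases "i = 0 \<and> j = 1")
    case True
    then have "{l\<in>{..<n+1}. i = 0 \<and> j = 1 \<and> 2 \<le> l} = {2..n}" by auto
    then show ?thesis using True by (simp add: sum_negf)
  qed auto
  finally show ?thesis .
qed

lemma Xmat_pow3: "Xmat n R ^\<^sub>m 3 = 0\<^sub>m (n+1) (n+1)"
proof -
  have cube: "Xmat n R * Xmat n R * Xmat n R = 0\<^sub>m (n+1) (n+1)"
  proof (rule eq_matI)
    fix i j assume "i < dim_row (0\<^sub>m (n+1) (n+1) :: real mat)" "j < dim_col (0\<^sub>m (n+1) (n+1) :: real mat)"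
    then have i: "i < n+1" and j: "j < n+1" by auto
    have vanish: "(Xmat n R * Xmat n R) $$ (i,l) * Xmat n R $$ (l,j) = 0" if "l < n+1" for l
      using that i j by (cases "l = 1") (simp_all add: Xmat_index Xmat_square_index del: index_mult_mat)
    have "(Xmat n R * Xmat n R * Xmat n R) $$ (i,j)
        = (\<Sum>l<n+1. (Xmat n R * Xmat n R) $$ (i,l) * Xmat n R $$ (l,j))"
      by (rule index_mult_mat_sum[OF mult_carrier_mat[OF Xmat_carrier Xmat_carrier] Xmat_carrier i j])
    also have "\<dots> = 0"
      using vanish by (intro sum.neutral) (simp del: index_mult_mat)
    finally show "(Xmat n R * Xmat n R * Xmat n R) $$ (i,j) = 0\<^sub>m (n+1) (n+1) $$ (i,j)"
      using i j by simp
  qed simp_all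
  show ?thesis
    using cube by (simp add: numeral_3_eq_3)
qed

lemma mexp_Xmat_index:
  assumes ij: "i < n+1" "j < n+1"
  shows "mexp (Xmat n R) $$ (i,j) = (if i = j then 1 else 0)
     + (if i = 0 \<and> 2 \<le> j then R j else if 2 \<le> i \<and> j = 1 then - R i else 0)
     + (if i = 0 \<and> j = 1 then - (\<Sum>k\<in>{2..n}. (R k)\<^sup>2) / 2 else 0)"
proof -
  have "1 \<cdot>\<^sub>m Xmat n R = Xmat n R" by (rule eq_matI) auto
  then have "mexp (Xmat n R) $$ (i,j)
      = 1\<^sub>m (n+1) $$ (i,j) + Xmat n R $$ (i,j) + (Xmat n R ^\<^sub>m 2) $$ (i,j) / 2"
    using mexp_smult_nilpotent[OF Xmat_carrier[of n R] Xmat_pow3 ij, of 1] by simp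
  moreover have "Xmat n R ^\<^sub>m 2 = Xmat n R * Xmat n R" by (simp add: numeral_2_eq_2)
  ultimately show ?thesis
    using ij by (simp add: Xmat_index Xmat_square_index del: index_mult_mat)
qed

lemma Ngrp_carrier: "P \<in> Ngrp n \<Longrightarrow> P \<in> carrier_mat (n+1) (n+1)"
  unfolding Ngrp_def using mexp_carrier[OF Xmat_carrier] by auto

definition Xcoords :: "nat \<Rightarrow> real mat \<Rightarrow> nat \<Rightarrow> real" where
  "Xcoords n D = (\<lambda>j. if 2 \<le> j \<and> j \<le> n then D $$ (0,j) else 0)"

lemma Xmat_Xcoords:
  assumes D: "D \<in> carrier_mat (n+1) (n+1)"
    and zero: "\<And>i j. i < n+1 \<Longrightarrow> j < n+1 \<Longrightarrow> \<not> (i = 0 \<and> 2 \<le> j) \<Longrightarrow> \<not> (2 \<le> i \<and> j = 1)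
        \<Longrightarrow> D $$ (i,j) = 0"
    and skew: "\<And>i. 2 \<le> i \<Longrightarrow> i < n+1 \<Longrightarrow> D $$ (i,1) = - D $$ (0,i)"
  shows "D = Xmat n (Xcoords n D)"
proof (rule eq_matI)
  fix i j assume "i < dim_row (Xmat n (Xcoords n D))" "j < dim_col (Xmat n (Xcoords n D))"
  then have i: "i < n+1" and j: "j < n+1" by auto
  show "D $$ (i,j) = Xmat n (Xcoords n D) $$ (i,j)"
    using zero[OF i j] skew[of i] i j by (auto simp: Xmat_index Xcoords_def)
qed (use D in auto)

text \<open>Along \<open>P t = exp(X(R t))\<close> every entry is constant, an entry of row \<open>0\<close> up to sign, or
  (entry \<open>(0,1)\<close>) minus half the squared norm of row \<open>0\<close>, whose derivative vanishes at \<open>P 0 = 1\<close>.\<close>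

lemma Ngrp_tangent_at_one:
  assumes P: "\<And>t. P t \<in> Ngrp n" and P0: "P 0 = 1\<^sub>m (n+1)"
    and D: "D \<in> carrier_mat (n+1) (n+1)" and n: "n \<ge> 1"
    and deriv: "\<And>i j. i < n+1 \<Longrightarrow> j < n+1 \<Longrightarrow>
        ((\<lambda>t. P t $$ (i,j)) has_real_derivative D $$ (i,j)) (at 0)"
  shows "D = Xmat n (Xcoords n D)"
proof -
  have "\<exists>Rt. P t = mexp (Xmat n Rt)" for t
    using P[of t] unfolding Ngrp_def by blast
  then obtain R where R: "\<And>t. P t = mexp (Xmat n (R t))"
    by metis
  have const: "D $$ (i,j) = 0"
    if ij: "i < n+1" "j < n+1" "\<not> (i = 0 \<and> 1 \<le> j)" "\<not> (2 \<le> i \<and> j = 1)" for i j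
  proof -
    have "(\<lambda>t. P t $$ (i,j)) = (\<lambda>t. if i = j then 1 else 0)"
      using ij by (auto simp: R mexp_Xmat_index)
    then show ?thesis
      using DERIV_unique[OF deriv[OF ij(1,2)]] by simp
  qed
  have skew: "D $$ (i,1) = - D $$ (0,i)" if i: "2 \<le> i" "i < n+1" for i
  proof -
    have "(\<lambda>t. P t $$ (i,1)) = (\<lambda>t. - 1 * P t $$ (0,i))"
      using i by (auto simp: R mexp_Xmat_index)
    moreover have "((\<lambda>t. - 1 * P t $$ (0,i)) has_real_derivative - 1 * D $$ (0,i)) (at 0)"
      using i by (intro DERIV_cmult deriv) auto
    ultimately show ?thesis
      using DERIV_unique[OF deriv[of i 1]] i n by simp
  qed
  have corner: "D $$ (0,1) = 0"
  proof -
    have "(\<lambda>t. P t $$ (0,1)) = (\<lambda>t. - 1/2 * (\<Sum>k\<in>{2..n}. (P t $$ (0,k))\<^sup>2))"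
      using n by (auto simp: R mexp_Xmat_index intro!: sum.cong)
    moreover have "((\<lambda>t. - 1/2 * (\<Sum>k\<in>{2..n}. (P t $$ (0,k))\<^sup>2)) has_real_derivative
        - 1/2 * (\<Sum>k\<in>{2..n}. of_nat 2 * (D $$ (0,k) * (P 0 $$ (0,k)) ^ (2 - Suc 0)))) (at 0)"
      by (intro DERIV_cmult DERIV_sum DERIV_power deriv) auto
    ultimately show ?thesis
      using DERIV_unique[OF deriv[of 0 1]] n by (simp add: P0)
  qed
  show ?thesis
  proof (rule Xmat_Xcoords[OF D _ skew])
    fix i j assume "i < n+1" "j < n+1" "\<not> (i = 0 \<and> 2 \<le> j)" "\<not> (2 \<le> i \<and> j = 1)"
    then show "D $$ (i,j) = 0"
      using const corner by (cases "i = 0 \<and> j = 1") auto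
  qed
qed

lemma lie_alg_conj_Ngrp:
  assumes g: "g \<in> carrier_mat (n+1) (n+1)" and h: "h \<in> carrier_mat (n+1) (n+1)"
    and gh: "g * h = 1\<^sub>m (n+1)" and hg: "h * g = 1\<^sub>m (n+1)"
    and V: "V \<subseteq> Ngrp n" and U: "U = {g * v * h | v. v \<in> V}"
    and X: "X \<in> lie_alg n U" and n: "n \<ge> 1"
  shows "X = g * Xmat n (Xcoords n (h * X * g)) * h"
proof -
  have Xc: "X \<in> carrier_mat (n+1) (n+1)" using X unfolding lie_alg_def by auto
  have curve: "h * mexp (t \<cdot>\<^sub>m X) * g \<in> Ngrp n" for t
  proof -
    obtain v where v: "v \<in> V" and ev: "mexp (t \<cdot>\<^sub>m X) = g * v * h"
      using X U unfolding lie_alg_def by auto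
    then show ?thesis
      using conj_cancel_mat[OF h g Ngrp_carrier hg] V by auto
  qed
  have "h * X * g = Xmat n (Xcoords n (h * X * g))"
  proof (rule Ngrp_tangent_at_one[OF curve _ _ n])
    show "h * mexp (0 \<cdot>\<^sub>m X) * g = 1\<^sub>m (n+1)"
      using mexp_smult_zero[OF Xc] h hg by simp
    show "h * X * g \<in> carrier_mat (n+1) (n+1)" using g h Xc by auto
  qed (rule has_real_derivative_conj_mexp_smult[OF Xc h g])
  then show ?thesis
    using conj_cancel_mat[OF g h Xc gh] by simp
qed

subsection \<open>Rows of \<open>G\<close> and of \<open>HM\<close>\<close>

lemma Mgrp_blockE:
  assumes "B \<in> Mgrp n" and n: "n \<ge> 1"
  obtains m' where "m' \<in> carrier_mat (n-1) (n-1)" "m' * transpose_mat m' = 1\<^sub>m (n-1)"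
    and "B \<in> carrier_mat (n+1) (n+1)"
    and "\<And>i j. 2 \<le> i \<Longrightarrow> i < n+1 \<Longrightarrow> j < n+1 \<Longrightarrow>
        B $$ (i,j) = (if j < 2 then 0 else m' $$ (i-2, j-2))"
proof -
  obtain e m' where B: "B = four_block_mat (e \<cdot>\<^sub>m 1\<^sub>m 2) (0\<^sub>m 2 (n-1)) (0\<^sub>m (n-1) 2) m'"
    and m': "m' \<in> carrier_mat (n-1) (n-1)" "m' * transpose_mat m' = 1\<^sub>m (n-1)"
    using assms(1) unfolding Mgrp_def by auto
  have dim: "2 + (n - 1) = n + 1" using n by simp
  show ?thesis
  proof (rule that[OF m'])
    show "B \<in> carrier_mat (n+1) (n+1)"
      unfolding B dim[symmetric] using m'(1) by (intro four_block_carrier_mat) auto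
    show "B $$ (i,j) = (if j < 2 then 0 else m' $$ (i-2, j-2))"
      if "2 \<le> i" "i < n+1" "j < n+1" for i j
      unfolding B using that m'(1) n by (auto simp: dim)
  qed
qed

lemma Mgrp_row_norm:
  assumes B: "B \<in> Mgrp n" and n: "n \<ge> 1" and i: "2 \<le> i" "i < n+1"
  shows "(\<Sum>j<n+1. (B $$ (i,j))\<^sup>2) = 1"
proof -
  obtain m' where m': "m' \<in> carrier_mat (n-1) (n-1)" "m' * transpose_mat m' = 1\<^sub>m (n-1)"
    and Bij: "\<And>j. j < n+1 \<Longrightarrow> B $$ (i,j) = (if j < 2 then 0 else m' $$ (i-2, j-2))"
    using Mgrp_blockE[OF B n] i by metis
  have "(\<Sum>j<n+1. (B $$ (i,j))\<^sup>2) = (\<Sum>j<Suc (Suc (n-1)). (if j < 2 then 0 else m' $$ (i-2, j-2))\<^sup>2)"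
    using n by (intro sum.cong) (auto simp: Bij)
  also have "\<dots> = (\<Sum>l<n-1. (m' $$ (i-2, l))\<^sup>2)"
    by (simp add: sum.lessThan_Suc_shift del: sum.lessThan_Suc)
  also have "\<dots> = (m' * transpose_mat m') $$ (i-2, i-2)"
    using m'(1) i by (subst index_mult_mat_sum[of _ "n-1" "n-1" _ "n-1"]) (auto simp: power2_eq_square)
  also have "\<dots> = 1"
    using i unfolding m'(2) by simp
  finally show ?thesis .
qed

lemma Hgrp_mult_row:
  assumes A: "A \<in> Hgrp n" and B: "B \<in> carrier_mat (n+1) (n+1)"
    and i: "i \<in> {2,3}" "i < n+1" and j: "j < n+1"
  shows "(A * B) $$ (i,j) = B $$ (i,j)"
proof -
  have Ac: "A \<in> carrier_mat (n+1) (n+1)" using A unfolding Hgrp_def Ggrp_def by auto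
  have Arow: "A $$ (i,k) = (if i = k then 1 else 0)" if "k < n+1" for k
    using A i that unfolding Hgrp_def by blast
  have "(A * B) $$ (i,j) = (\<Sum>k<n+1. A $$ (i,k) * B $$ (k,j))"
    by (rule index_mult_mat_sum[OF Ac B i(2) j])
  also have "\<dots> = (\<Sum>k<n+1. if k = i then B $$ (i,j) else 0)"
    by (intro sum.cong) (auto simp: Arow)
  finally show ?thesis using i by simp
qed

lemma HM_row_norm:
  assumes n: "n \<ge> 3" and M: "M \<in> HM n" and i: "i \<in> {2,3}"
  shows "(\<Sum>j<n+1. (M $$ (i,j))\<^sup>2) = 1"
proof -
  obtain A B where M: "M = A * B" and A: "A \<in> Hgrp n" and B: "B \<in> Mgrp n"
    using M unfolding HM_def by auto
  have Bc: "B \<in> carrier_mat (n+1) (n+1)" using Mgrp_blockE[OF B] n by (metis le_trans one_le_numeral)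
  have il: "i < n+1" using i n by auto
  have "(\<Sum>j<n+1. (M $$ (i,j))\<^sup>2) = (\<Sum>j<n+1. (B $$ (i,j))\<^sup>2)"
    unfolding M by (intro sum.cong) (auto simp: Hgrp_mult_row[OF A Bc i il] simp del: index_mult_mat)
  also have "\<dots> = 1" using Mgrp_row_norm[OF B] i n by auto
  finally show ?thesis .
qed

lemma Ggrp_rows_Qmat:
  assumes g: "g \<in> Ggrp n" and n: "n \<ge> 1" and i: "2 \<le> i" "i < n+1" and k: "k < n+1"
  shows "g $$ (i,1) * g $$ (k,0) + g $$ (i,0) * g $$ (k,1) + (\<Sum>b\<in>{2..n}. g $$ (i,b) * g $$ (k,b))
     = (if i = k then 1 else 0)"
proof -
  have gc: "g \<in> carrier_mat (n+1) (n+1)" and eq: "g * Qmat n * transpose_mat g = Qmat n"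
    using g unfolding Ggrp_def by auto
  have Qc: "Qmat n \<in> carrier_mat (n+1) (n+1)" unfolding Qmat_def by simp
  have Q: "Qmat n $$ (a,b) = (if (a = 0 \<and> b = 1) \<or> (a = 1 \<and> b = 0) then 1 else if a = b \<and> 2 \<le> a then 1 else 0)"
    if "a < n+1" "b < n+1" for a b
    using that unfolding Qmat_def by simp
  have gQ: "(g * Qmat n) $$ (i,b) = (if b = 0 then g $$ (i,1) else if b = 1 then g $$ (i,0) else g $$ (i,b))"
    if b: "b < n+1" for b
  proof -
    have "(g * Qmat n) $$ (i,b) = (\<Sum>a<n+1. g $$ (i,a) * Qmat n $$ (a,b))"
      by (rule index_mult_mat_sum[OF gc Qc i(2) b])
    also have "\<dots> = (\<Sum>a<n+1. if a = (if b = 0 then 1 else if b = 1 then 0 else b) then g $$ (i,a) else 0)"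
      using b by (intro sum.cong) (auto simp: Q)
    finally show ?thesis using b n by auto
  qed
  have "(g * Qmat n * transpose_mat g) $$ (i,k) = (\<Sum>b<n+1. (g * Qmat n) $$ (i,b) * g $$ (k,b))"
    using gc Qc i k by (subst index_mult_mat_sum[of _ "n+1" "n+1"]) auto
  also have "\<dots> = (g * Qmat n) $$ (i,0) * g $$ (k,0) + (g * Qmat n) $$ (i,1) * g $$ (k,1)
      + (\<Sum>b\<in>{2..n}. (g * Qmat n) $$ (i,b) * g $$ (k,b))"
    by (rule sum_lessThan_Suc_split01[OF n])
  also have "\<dots> = g $$ (i,1) * g $$ (k,0) + g $$ (i,0) * g $$ (k,1) + (\<Sum>b\<in>{2..n}. g $$ (i,b) * g $$ (k,b))"
    using n by (simp add: gQ del: index_mult_mat)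
  finally show ?thesis unfolding eq using i k by (simp add: Q)
qed

lemma Xmat_coords_of_zero_row:
  assumes g: "g \<in> carrier_mat (n+1) (n+1)" and h: "h \<in> carrier_mat (n+1) (n+1)"
    and hg: "h * g = 1\<^sub>m (n+1)" and i: "i < n+1" and n: "n \<ge> 1"
    and row: "\<And>j. j < n+1 \<Longrightarrow> (g * Xmat n R * h) $$ (i,j) = 0"
  shows "\<forall>j\<in>{2..n}. g $$ (i,0) * R j = 0" and "(\<Sum>k\<in>{2..n}. g $$ (i,k) * R k) = 0"
proof -
  have gX: "g * Xmat n R * h * g = g * Xmat n R"
  proof -
    have "g * Xmat n R * h * g = g * Xmat n R * (h * g)"
      using g h by (intro assoc_mult_mat) auto
    then show ?thesis using g hg by simp
  qed
  have zero: "(g * Xmat n R) $$ (i,j) = 0" if j: "j < n+1" for j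
  proof -
    have "(g * Xmat n R * h * g) $$ (i,j) = 0"
      by (rule mult_mat_row_zero[of _ "n+1" "n+1"]) (use g h i j row mult_carrier_mat[OF mult_carrier_mat[OF g Xmat_carrier] h]
           in \<open>auto simp del: index_mult_mat\<close>)
    then show ?thesis unfolding gX .
  qed
  have split: "(g * Xmat n R) $$ (i,j) = g $$ (i,0) * Xmat n R $$ (0,j) + g $$ (i,1) * Xmat n R $$ (1,j)
      + (\<Sum>k\<in>{2..n}. g $$ (i,k) * Xmat n R $$ (k,j))" if j: "j < n+1" for j
    using index_mult_mat_sum[OF g Xmat_carrier i j] sum_lessThan_Suc_split01[OF n] by simp
  have expand: "g $$ (i,0) * Xmat n R $$ (0,j) + g $$ (i,1) * Xmat n R $$ (1,j)
      + (\<Sum>k\<in>{2..n}. g $$ (i,k) * Xmat n R $$ (k,j)) = 0" if "j < n+1" for j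
    using zero[OF that] split[OF that] by simp
  show "\<forall>j\<in>{2..n}. g $$ (i,0) * R j = 0"
  proof
    fix j assume j: "j \<in> {2..n}"
    have "(\<Sum>k\<in>{2..n}. g $$ (i,k) * Xmat n R $$ (k,j)) = 0"
      using j by (intro sum.neutral) (auto simp: Xmat_index)
    then show "g $$ (i,0) * R j = 0" using expand[of j] j by (simp add: Xmat_index)
  qed
  have "(\<Sum>k\<in>{2..n}. g $$ (i,k) * Xmat n R $$ (k,1)) = - (\<Sum>k\<in>{2..n}. g $$ (i,k) * R k)"
    by (simp add: sum_negf[symmetric], rule sum.cong) (auto simp: Xmat_index)
  then show "(\<Sum>k\<in>{2..n}. g $$ (i,k) * R k) = 0" using expand[of 1] n by (simp add: Xmat_index)
qed

lemma lie_alg_HM_coords: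
  assumes n: "n \<ge> 3" and U: "U \<subseteq> HM n" and X: "X \<in> lie_alg n U"
    and g: "g \<in> carrier_mat (n+1) (n+1)" and h: "h \<in> carrier_mat (n+1) (n+1)"
    and gh: "g * h = 1\<^sub>m (n+1)" and hg: "h * g = 1\<^sub>m (n+1)"
    and XR: "X = g * Xmat n R * h" and i: "i \<in> {2,3}"
  shows "\<forall>j\<in>{2..n}. g $$ (i,0) * R j = 0" and "(\<Sum>k\<in>{2..n}. g $$ (i,k) * R k) = 0"
proof -
  have Xc: "X \<in> carrier_mat (n+1) (n+1)" using X unfolding lie_alg_def by auto
  have cube: "X ^\<^sub>m 3 = 0\<^sub>m (n+1) (n+1)"
    unfolding XR pow_mat_conj[OF g h Xmat_carrier gh hg] Xmat_pow3 using g h by simp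
  have il: "i < n+1" using i n by auto
  have "X $$ (i,j) = 0" if "j < n+1" for j
  proof (rule mexp_row_unit_imp_row_zero[OF Xc cube il _ that])
    show "(\<Sum>j<n+1. (mexp (t \<cdot>\<^sub>m X) $$ (i,j))\<^sup>2) = 1" for t
      using HM_row_norm[OF n _ i] X U unfolding lie_alg_def by auto
  qed
  then show "\<forall>j\<in>{2..n}. g $$ (i,0) * R j = 0" and "(\<Sum>k\<in>{2..n}. g $$ (i,k) * R k) = 0"
    using Xmat_coords_of_zero_row[OF g h hg il] n XR by auto
qed

subsection \<open>Counting dimensions\<close>

text \<open>The coordinate vectors \<open>R\<close> of \<open>X(R)\<close> live in \<open>nat \<Rightarrow> real\<close>, which has no
  \<open>real_vector\<close> instance; scaling is made explicit instead.\<close>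

interpretation real_fun: vector_space "\<lambda>c (f :: nat \<Rightarrow> real) i. c * f i"
  by unfold_locales (auto simp: fun_eq_iff algebra_simps plus_fun_def)

lemma sum_fun_apply: "(\<Sum>v\<in>A. f v) (k :: nat) = (\<Sum>v\<in>A. f v k :: real)"
  by (induction A rule: infinite_finite_induct) (auto simp: plus_fun_def zero_fun_def)

lemma real_fun_span_orthogonal:
  assumes "v \<in> real_fun.span A" and orth: "\<And>a. a \<in> A \<Longrightarrow> (\<Sum>k\<in>I. a k * z k) = 0"
  shows "(\<Sum>k\<in>I. v k * z k) = 0"
  using assms(1)
proof (induction rule: real_fun.span_induct_alt)
  case (step c x y)
  have "(\<Sum>k\<in>I. (c * x k + y k) * z k) = c * (\<Sum>k\<in>I. x k * z k) + (\<Sum>k\<in>I. y k * z k)"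
    by (simp add: algebra_simps sum.distrib sum_distrib_left)
  then show ?case using step orth by (simp add: plus_fun_def)
qed simp

lemma real_fun_in_span_units:
  assumes I: "finite I" and supp: "\<And>k. k \<notin> I \<Longrightarrow> f k = 0"
  shows "f \<in> real_fun.span ((\<lambda>j i. if i = j then 1 else 0) ` I)"
proof -
  have "f = (\<Sum>j\<in>I. (\<lambda>i. f j * (if i = j then 1 else 0)))"
  proof
    fix k
    show "f k = (\<Sum>j\<in>I. (\<lambda>i. f j * (if i = j then 1 else 0))) k"
      unfolding sum_fun_apply using I supp[of k] by (cases "k \<in> I") (simp_all add: if_distrib cong: if_cong)
  qed
  also have "\<dots> \<in> real_fun.span ((\<lambda>j i. if i = j then 1 else 0) ` I)"
    by (intro real_fun.span_sum real_fun.span_scale real_fun.span_base) auto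
  finally show ?thesis .
qed

lemma card_independent_orthogonal_pair:
  assumes I: "finite I" and A: "\<not> real_fun.dependent A"
    and supp: "\<And>f k. f \<in> insert p (insert q A) \<Longrightarrow> k \<notin> I \<Longrightarrow> f k = 0"
    and orth: "\<And>a. a \<in> A \<Longrightarrow> (\<Sum>k\<in>I. a k * p k) = 0 \<and> (\<Sum>k\<in>I. a k * q k) = 0"
    and pp: "(\<Sum>k\<in>I. p k * p k) = 1" and qq: "(\<Sum>k\<in>I. q k * q k) = 1"
    and qp: "(\<Sum>k\<in>I. q k * p k) = 0"
  shows "card A + 2 \<le> card I"
proof -
  define B where "B = insert p (insert q A)"
  have q: "q \<notin> real_fun.span A"
    using real_fun_span_orthogonal[where v = q and A = A and I = I and z = q] orth qq by auto
  have p: "p \<notin> real_fun.span (insert q A)"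
    using real_fun_span_orthogonal[where v = p and A = "insert q A" and I = I and z = p] orth qp pp
    by auto
  have indep: "\<not> real_fun.dependent B"
    unfolding B_def using p q A by (intro real_fun.independent_insertI)
  have "B \<subseteq> real_fun.span ((\<lambda>j i. if i = j then 1 else 0) ` I)"
    using real_fun_in_span_units[OF I] supp unfolding B_def by blast
  then have "finite B" "card B \<le> card ((\<lambda>j (i :: nat). if i = j then 1 else 0 :: real) ` I)"
    using real_fun.independent_span_bound[OF finite_imageI[OF I] indep] by auto
  moreover have "p \<notin> insert q A" "q \<notin> A"
    using p q real_fun.span_base by blast+
  ultimately have "card A + 2 \<le> card ((\<lambda>j (i :: nat). if i = j then 1 else 0 :: real) ` I)"
    unfolding B_def by auto
  then show ?thesis
    using card_image_le[OF I] by (metis le_trans)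
qed

lemma independent_image_coords:
  assumes S: "finite S" and inj: "inj_on R S"
    and indep: "\<And>c. \<forall>k. (\<Sum>X\<in>S. c X * R X k) = 0 \<Longrightarrow> \<forall>X\<in>S. c X = 0"
  shows "\<not> real_fun.dependent (R ` S)"
proof
  assume "real_fun.dependent (R ` S)"
  then obtain u where nz: "\<exists>v\<in>R ` S. u v \<noteq> 0" and sum: "(\<Sum>v\<in>R ` S. (\<lambda>i. u v * v i)) = 0"
    using real_fun.dependent_finite[OF finite_imageI[OF S]] by auto
  have "(\<Sum>X\<in>S. u (R X) * R X k) = 0" for k
    using fun_cong[OF sum, of k] sum.reindex[OF inj, of "\<lambda>v. u v * v k"]
    by (simp add: sum_fun_apply)
  then have "\<forall>X\<in>S. u (R X) = 0" using indep[of "\<lambda>X. u (R X)"] by blast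
  then show False using nz by auto
qed

lemma sum_Xmat_index:
  assumes "i < n+1" "j < n+1"
  shows "(\<Sum>X\<in>S. c X * Xmat n (R X) $$ (i,j)) = Xmat n (\<lambda>k. \<Sum>X\<in>S. c X * R X k) $$ (i,j)"
  using assms
  by (cases "i = 0 \<and> 2 \<le> j"; cases "2 \<le> i \<and> j = 1") (auto simp: Xmat_index sum_negf)

lemma mat_lin_indep_conj_Xmat:
  assumes g: "g \<in> carrier_mat (n+1) (n+1)" and h: "h \<in> carrier_mat (n+1) (n+1)"
    and conj: "\<And>X. X \<in> S \<Longrightarrow> X = g * Xmat n (R X) * h" and indep: "mat_lin_indep n S"
    and c: "\<forall>k. (\<Sum>X\<in>S. c X * R X k) = 0"
  shows "\<forall>X\<in>S. c X = 0"
proof -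
  have Y: "(\<Sum>X\<in>S. c X * Xmat n (R X) $$ (a,b)) = 0" if "a < n+1" "b < n+1" for a b
    using c that by (simp add: sum_Xmat_index Xmat_zero)
  have "(\<Sum>X\<in>S. c X * X $$ (i,j)) = 0" if ij: "i < n+1" "j < n+1" for i j
  proof -
    have "c X * X $$ (i,j)
        = (\<Sum>b<n+1. \<Sum>a<n+1. (c X * Xmat n (R X) $$ (a,b)) * (g $$ (i,a) * h $$ (b,j)))"
      if X: "X \<in> S" for X
    proof -
      from conj[OF X] have "X $$ (i,j) = (g * Xmat n (R X) * h) $$ (i,j)" by (rule arg_cong)
      then show ?thesis
        unfolding index_mult_mat_triple[OF g Xmat_carrier h ij]
        by (simp add: sum_distrib_left sum_distrib_right mult_ac del: sum.lessThan_Suc)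
    qed
    then have "(\<Sum>X\<in>S. c X * X $$ (i,j))
        = (\<Sum>b<n+1. \<Sum>a<n+1. (\<Sum>X\<in>S. c X * Xmat n (R X) $$ (a,b)) * (g $$ (i,a) * h $$ (b,j)))"
      by (simp add: sum.swap[of _ S] sum_distrib_right del: sum.lessThan_Suc)
    also have "\<dots> = 0" by (simp add: Y del: sum.lessThan_Suc)
    finally show ?thesis .
  qed
  then show ?thesis using indep unfolding mat_lin_indep_def by blast
qed

lemma mat_dim_le:
  assumes "\<And>S. finite S \<Longrightarrow> S \<subseteq> L \<Longrightarrow> mat_lin_indep n S \<Longrightarrow> card S \<le> k"
  shows "mat_dim n L \<le> k"
  unfolding mat_dim_def
proof (rule cSup_least)
  have "mat_lin_indep n {}" unfolding mat_lin_indep_def by simp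
  then show "{card S |S. finite S \<and> S \<subseteq> L \<and> mat_lin_indep n S} \<noteq> {}" by blast
qed (use assms in auto)

lemma card_coords_orthogonal_to_Ggrp_rows:
  assumes n: "n \<ge> 3" and g: "g \<in> Ggrp n" and S: "finite S" and inj: "inj_on R S"
    and indep: "\<And>c. \<forall>k. (\<Sum>X\<in>S. c X * R X k) = 0 \<Longrightarrow> \<forall>X\<in>S. c X = 0"
    and supp: "\<And>X k. X \<in> S \<Longrightarrow> k \<notin> {2..n} \<Longrightarrow> R X k = 0"
    and col0: "\<And>X i. X \<in> S \<Longrightarrow> i \<in> {2,3} \<Longrightarrow> \<forall>j\<in>{2..n}. g $$ (i,0) * R X j = 0"
    and orth: "\<And>X i. X \<in> S \<Longrightarrow> i \<in> {2,3} \<Longrightarrow> (\<Sum>k\<in>{2..n}. g $$ (i,k) * R X k) = 0"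
  shows "card S \<le> n - 3"
proof (cases "g $$ (2,0) = 0 \<and> g $$ (3,0) = 0")
  case True
  define z where "z i k = (if k \<in> {2..n} then g $$ (i,k) else 0)" for i k
  have zz: "(\<Sum>k\<in>{2..n}. z i k * z i' k) = (if i = i' then 1 else 0)"
    if "i \<in> {2,3}" "i' \<in> {2,3}" for i i'
    using Ggrp_rows_Qmat[OF g _ _ _, of i i'] that True n by (auto simp: z_def)
  have "card (R ` S) + 2 \<le> card {2..n}"
  proof (rule card_independent_orthogonal_pair[where p = "z 2" and q = "z 3"])
    show "\<not> real_fun.dependent (R ` S)" by (rule independent_image_coords[OF S inj indep])
    show "(\<Sum>k\<in>{2..n}. a k * z 2 k) = 0 \<and> (\<Sum>k\<in>{2..n}. a k * z 3 k) = 0" if "a \<in> R ` S" for a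
      using that orth by (auto simp: z_def mult.commute)
  qed (use zz supp in \<open>auto simp: z_def\<close>)
  then show ?thesis using card_image[OF inj] by simp
next
  case False
  then obtain i where "i \<in> {2,3}" "g $$ (i,0) \<noteq> 0" by auto
  then have "R X k = 0" if "X \<in> S" for X k
    using col0[of X i] supp[of X k] that by (cases "k \<in> {2..n}") auto
  then have "S = {}" using indep[of "\<lambda>_. 1"] by auto
  then show ?thesis by simp
qed

theorem proposition6:
  fixes n :: nat and U :: "real mat set"
  assumes "n \<ge> 3"
    and "unipotent n U"
    and "U \<subseteq> HM n"
  shows "group_dim n U \<le> n - 3"
proof -
  obtain g h V where g: "g \<in> Ggrp n" and h: "h \<in> carrier_mat (n+1) (n+1)"
    and gh: "g * h = 1\<^sub>m (n+1)" and hg: "h * g = 1\<^sub>m (n+1)"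
    and V: "V \<subseteq> Ngrp n" and U: "U = {g * v * h | v. v \<in> V}"
    using assms(2) unfolding unipotent_def by blast
  have gc: "g \<in> carrier_mat (n+1) (n+1)" using g unfolding Ggrp_def by auto
  define R where "R X = Xcoords n (h * X * g)" for X
  have conj: "X = g * Xmat n (R X) * h" if "X \<in> lie_alg n U" for X
    unfolding R_def using lie_alg_conj_Ngrp[OF gc h gh hg V U that] assms(1) by simp
  note coords = lie_alg_HM_coords[OF assms(1,3) _ gc h gh hg conj]
  show ?thesis
    unfolding group_dim_def
  proof (rule mat_dim_le)
    fix S assume S: "finite S" "S \<subseteq> lie_alg n U" "mat_lin_indep n S"
    show "card S \<le> n - 3"
    proof (rule card_coords_orthogonal_to_Ggrp_rows[OF assms(1) g S(1)])
      show "inj_on R S" using conj S(2) by (metis inj_onI subsetD)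
      show "\<forall>X\<in>S. c X = 0" if "\<forall>k. (\<Sum>X\<in>S. c X * R X k) = 0" for c
        using mat_lin_indep_conj_Xmat[OF gc h conj S(3) that] S(2) by blast
      show "R X k = 0" if "k \<notin> {2..n}" for X k
        using that by (auto simp: R_def Xcoords_def)
      show "\<forall>j\<in>{2..n}. g $$ (i,0) * R X j = 0" "(\<Sum>k\<in>{2..n}. g $$ (i,k) * R X k) = 0"
        if "X \<in> S" "i \<in> {2,3}" for X i
        using coords[of X i] S(2) that by blast+
    qed
  qed
qed

end
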